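(* Let $\underline c<\overline c$ and $\underline s<\overline s$ be real numbers and write $\phi(c,s)=\sqrt{c^2+s^2}$. Suppose $$\phi(\overline c,\overline s)+\phi(\underline c,\underline s)-\phi(\overline c,\underline s)-\phi(\underline c,\overline s)<0.$$ Define $\eta^3=\frac{\phi(\overline c,\underline s)-\phi(\underline c,\underline s)}{\overline c-\underline c}$, $\delta^3=\frac{\phi(\underline c,\overline s)-\phi(\underline c,\underline s)}{\overline s-\underline s}$, $\nu^3=\phi(\underline c,\underline s)-\eta^3\underline c-\delta^3\underline s$, and $\eta^4=\frac{\phi(\overline c,\overline s)-\phi(\underline c,\overline s)}{\overline c-\underline c}$, $\delta^4=\frac{\phi(\overline c,\overline s)-\phi(\overline c,\underline s)}{\overline s-\underline s}$, $\nu^4=\phi(\overline c,\overline s)-\eta^4\overline c-\delta^4\overline s$. Then for $n=3,4$ and all $(c,s)\in[\underline c,\overline c]\times[\underline s,\overline s]$ we have $\nu^n+\eta^n c+\delta^n s\ge \sqrt{c^2+s^2}$. *)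

theory Defs
  imports Complex_Main
begin

definition phi :: "real \<Rightarrow> real \<Rightarrow> real" where
  "phi c s = sqrt (c\<^sup>2 + s\<^sup>2)"

end

theory Submission
  imports Defs
begin

text \<open>Since \<open>phi\<close> is the Euclidean norm, it is convex, so on the rectangle it lies below
  the bilinear interpolation of its four corner values. The planes \<open>n = 3, 4\<close> interpolate
  \<open>phi\<close> at the three corners other than \<open>(cu, su)\<close> resp. \<open>(cl, sl)\<close>; in local coordinates
  \<open>a, b \<in> [0, 1]\<close> they exceed the bilinear interpolant by \<open>a * b\<close> resp.
  \<open>(1 - a) * (1 - b)\<close> times the twist \<open>phi cu sl + phi cl su - phi cl sl - phi cu su\<close>,
  which the hypothesis makes positive.\<close>

definition bilerp :: "real \<Rightarrow> real \<Rightarrow> 'a \<Rightarrow> 'a \<Rightarrow> 'a \<Rightarrow> 'a \<Rightarrow> 'a::real_vector" where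
  "bilerp a b v00 v10 v01 v11 =
     ((1 - a) * (1 - b)) *\<^sub>R v00 + (a * (1 - b)) *\<^sub>R v10 + ((1 - a) * b) *\<^sub>R v01 + (a * b) *\<^sub>R v11"

lemma norm_bilerp_le:
  fixes v00 v10 v01 v11 :: "'a::real_normed_vector"
  assumes "a \<in> {0..1}" and "b \<in> {0..1}"
  shows "norm (bilerp a b v00 v10 v01 v11) \<le> bilerp a b (norm v00) (norm v10) (norm v01) (norm v11)"
proof -
  have "norm (bilerp a b v00 v10 v01 v11)
      \<le> norm (((1 - a) * (1 - b)) *\<^sub>R v00) + norm ((a * (1 - b)) *\<^sub>R v10)
         + norm (((1 - a) * b) *\<^sub>R v01) + norm ((a * b) *\<^sub>R v11)"
    unfolding bilerp_def by (smt (verit) norm_triangle_ineq)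
  also have "\<dots> = bilerp a b (norm v00) (norm v10) (norm v01) (norm v11)"
    using assms by (simp add: bilerp_def)
  finally show ?thesis .
qed

lemma bilerp_Complex_corners:
  "bilerp a b (Complex cl sl) (Complex cu sl) (Complex cl su) (Complex cu su)
     = Complex ((1 - a) * cl + a * cu) ((1 - b) * sl + b * su)"
  by (simp add: bilerp_def complex_eq_iff algebra_simps)

lemma phi_eq_cmod: "phi c s = cmod (Complex c s)"
  by (simp add: phi_def complex_norm)

lemma phi_le_bilerp_corners:
  assumes "a \<in> {0..1}" and "b \<in> {0..1}"
  shows "phi ((1 - a) * cl + a * cu) ((1 - b) * sl + b * su)
           \<le> bilerp a b (phi cl sl) (phi cu sl) (phi cl su) (phi cu su)"
  using norm_bilerp_le[OF assms, of "Complex cl sl" "Complex cu sl" "Complex cl su" "Complex cu su"]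
  by (simp only: phi_eq_cmod bilerp_Complex_corners)

lemma interval_eq_convex_combination:
  fixes x l u :: real
  assumes "l < u" and "x \<in> {l..u}"
  obtains t where "t \<in> {0..1}" and "x = (1 - t) * l + t * u"
proof
  define t where "t = (x - l) / (u - l)"
  show "t \<in> {0..1}" using assms by (auto simp: t_def field_simps)
  have "t * (u - l) = x - l" using assms by (simp add: t_def)
  then show "x = (1 - t) * l + t * u" by (simp add: algebra_simps)
qed

lemma lower_corner_plane_eq_bilerp:
  fixes cl cu sl su :: real
  assumes "cl \<noteq> cu" and "sl \<noteq> su"
  shows "f00 - (f10 - f00) / (cu - cl) * cl - (f01 - f00) / (su - sl) * sl
           + (f10 - f00) / (cu - cl) * ((1 - a) * cl + a * cu)
           + (f01 - f00) / (su - sl) * ((1 - b) * sl + b * su)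
         = bilerp a b f00 f10 f01 f11 + a * b * (f10 + f01 - f00 - f11)"
proof -
  define p q where "p = (f10 - f00) / (cu - cl)" and "q = (f01 - f00) / (su - sl)"
  have "p * (cu - cl) = f10 - f00" and "q * (su - sl) = f01 - f00"
    using assms by (simp_all add: p_def q_def)
  have "f00 - p * cl - q * sl + p * ((1 - a) * cl + a * cu) + q * ((1 - b) * sl + b * su)
      = f00 + a * (p * (cu - cl)) + b * (q * (su - sl))"
    by (simp add: algebra_simps)
  also have "\<dots> = f00 + a * (f10 - f00) + b * (f01 - f00)"
    by (simp only: \<open>p * (cu - cl) = f10 - f00\<close> \<open>q * (su - sl) = f01 - f00\<close>)
  also have "\<dots> = bilerp a b f00 f10 f01 f11 + a * b * (f10 + f01 - f00 - f11)"
    by (simp add: bilerp_def algebra_simps)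
  finally show ?thesis by (simp only: p_def q_def)
qed

lemma upper_corner_plane_eq_bilerp:
  fixes cl cu sl su :: real
  assumes "cl \<noteq> cu" and "sl \<noteq> su"
  shows "f11 - (f11 - f01) / (cu - cl) * cu - (f11 - f10) / (su - sl) * su
           + (f11 - f01) / (cu - cl) * ((1 - a) * cl + a * cu)
           + (f11 - f10) / (su - sl) * ((1 - b) * sl + b * su)
         = bilerp a b f00 f10 f01 f11 + (1 - a) * (1 - b) * (f10 + f01 - f00 - f11)"
proof -
  define p q where "p = (f11 - f01) / (cu - cl)" and "q = (f11 - f10) / (su - sl)"
  have "p * (cu - cl) = f11 - f01" and "q * (su - sl) = f11 - f10"
    using assms by (simp_all add: p_def q_def)
  have "f11 - p * cu - q * su + p * ((1 - a) * cl + a * cu) + q * ((1 - b) * sl + b * su)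
      = f11 - (1 - a) * (p * (cu - cl)) - (1 - b) * (q * (su - sl))"
    by (simp add: algebra_simps)
  also have "\<dots> = f11 - (1 - a) * (f11 - f01) - (1 - b) * (f11 - f10)"
    by (simp only: \<open>p * (cu - cl) = f11 - f01\<close> \<open>q * (su - sl) = f11 - f10\<close>)
  also have "\<dots> = bilerp a b f00 f10 f01 f11 + (1 - a) * (1 - b) * (f10 + f01 - f00 - f11)"
    by (simp add: bilerp_def algebra_simps)
  finally show ?thesis by (simp only: p_def q_def)
qed

theorem proposition4:
  fixes cl cu sl su :: real
  assumes "cl < cu" and "sl < su"
    and "phi cu su + phi cl sl - phi cu sl - phi cl su < 0"
  defines "eta3 \<equiv> (phi cu sl - phi cl sl) / (cu - cl)"
      and "delta3 \<equiv> (phi cl su - phi cl sl) / (su - sl)"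
      and "nu3 \<equiv> phi cl sl - (phi cu sl - phi cl sl) / (cu - cl) * cl - (phi cl su - phi cl sl) / (su - sl) * sl"
      and "eta4 \<equiv> (phi cu su - phi cl su) / (cu - cl)"
      and "delta4 \<equiv> (phi cu su - phi cu sl) / (su - sl)"
      and "nu4 \<equiv> phi cu su - (phi cu su - phi cl su) / (cu - cl) * cu - (phi cu su - phi cu sl) / (su - sl) * su"
  shows "\<forall>c\<in>{cl..cu}. \<forall>s\<in>{sl..su}.
           nu3 + eta3 * c + delta3 * s \<ge> sqrt (c\<^sup>2 + s\<^sup>2) \<and>
           nu4 + eta4 * c + delta4 * s \<ge> sqrt (c\<^sup>2 + s\<^sup>2)"
proof (intro ballI)
  fix c s assume "c \<in> {cl..cu}" and "s \<in> {sl..su}"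
  then obtain a b where a: "a \<in> {0..1}" and c: "c = (1 - a) * cl + a * cu"
    and b: "b \<in> {0..1}" and s: "s = (1 - b) * sl + b * su"
    using assms(1,2) interval_eq_convex_combination by metis
  let ?bilerp = "bilerp a b (phi cl sl) (phi cu sl) (phi cl su) (phi cu su)"
  let ?twist = "phi cu sl + phi cl su - phi cl sl - phi cu su"
  have "sqrt (c\<^sup>2 + s\<^sup>2) \<le> ?bilerp"
    using phi_le_bilerp_corners[OF a b] by (simp add: c s phi_def)
  moreover have "nu3 + eta3 * c + delta3 * s = ?bilerp + a * b * ?twist"
    using assms(1,2) unfolding nu3_def eta3_def delta3_def c s
    by (intro lower_corner_plane_eq_bilerp) auto
  moreover have "nu4 + eta4 * c + delta4 * s = ?bilerp + (1 - a) * (1 - b) * ?twist"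
    using assms(1,2) unfolding nu4_def eta4_def delta4_def c s
    by (intro upper_corner_plane_eq_bilerp) auto
  moreover have "a * b * ?twist \<ge> 0" and "(1 - a) * (1 - b) * ?twist \<ge> 0"
    using a b assms(3) by simp_all
  ultimately show "nu3 + eta3 * c + delta3 * s \<ge> sqrt (c\<^sup>2 + s\<^sup>2) \<and>
                   nu4 + eta4 * c + delta4 * s \<ge> sqrt (c\<^sup>2 + s\<^sup>2)"
    by linarith
qed

end
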